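(* Consider $\dot{\mathbf{x}}(s)=f(\mathbf{x}(s),\mathbf{u}(s))$, $s\in[-t,0]$, $\mathbf{x}(-t)=x$, with $f$ Lipschitz in the state and measurable controls in $U\subset\mathbb{R}^{n_u}$; let $g$ be Lipschitz. Let $\mathcal{D}=\{(x_i,u_i,v_i)\}_{i=1}^N$ with $u_i\in U$, $v_i=f(x_i,u_i)$, and let $\mathcal{E}$ be a closed-valued map with $f(x,u_i)-v_i\in\mathcal{E}(x;x_i)$ for all $i$ and all $x$. Define (1) $V(x,t)=\sup_{\mathbf{u}(\cdot)}\min_{s\in[-t,0]}g(\mathbf{x}(s))$; (2) $\widetilde{V}(x,t)=\sup_{\widetilde{\mathbf{u}}(\cdot)}\min_{s\in[-t,0]}g(\widetilde{\mathbf{x}}(s))$, where $\widetilde{\mathbf{x}}$ solves the same dynamics from $x$ at time $-t$ with controls restricted to $\widetilde{\mathbf{u}}(s)\in\{u_i\}_{i=1}^N$; (3) $\widehat{V}(x,t)=\inf_{\xi_w}\sup_{\mathbf{v}(\cdot)}\min_{s\in[-t,0]}g(\widehat{\mathbf{x}}(s))$ for the game $\dot{\widehat{\mathbf{x}}}(s)=\mathbf{v}(s)+\mathbf{w}(s)$, $\widehat{\mathbf{x}}(-t)=x$, with leader action $\mathbf{v}(s)\in\{v_i\}_{i=1}^N$, follower action $\mathbf{w}(s)\in W(\widehat{\mathbf{x}}(s),\mathbf{v}(s))$ where $W(x,v_j)=\mathcal{E}(x;x_j)$, and $\xi_w$ ranging over follower non-anticipative strategies. Then $\widehat{V}(x,t)\le\widetilde{V}(x,t)\le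 V(x,t)$ for all $x\in\mathbb{R}^{n_x}$ and $t\ge0$.
   Context: A non-anticipative strategy $\xi_w$ maps leader signals $\mathbf{v}(\cdot)$ to follower signals $\mathbf{w}(\cdot)$ such that if two leader signals agree on $[-t,s]$, so do the images on $[-t,s]$. *)

theory Defs
  imports "HOL-Analysis.Analysis"
begin

(* Caratheodory solution of  x'(s) = f(x(s), u(s)) on [-t,0], x(-t) = x0,
   written as the integral equation x(s) = x0 + int_{-t}^s f(x(r),u(r)) dr. *)
definition traj :: "('a::euclidean_space \<Rightarrow> 'b \<Rightarrow> 'a) \<Rightarrow> (real \<Rightarrow> 'b) \<Rightarrow> 'a \<Rightarrow> real \<Rightarrow> (real \<Rightarrow> 'a) \<Rightarrow> bool"
  where "traj f u x0 t xs \<longleftrightarrow>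
     (\<forall>s\<in>{-t..0}. ((\<lambda>r. f (xs r) (u r)) has_integral (xs s - x0)) {-t..s})"

definition signals :: "'b::euclidean_space set \<Rightarrow> real \<Rightarrow> (real \<Rightarrow> 'b) set"
  where "signals U t = {u. u measurable_on {-t..0} \<and> (\<forall>s\<in>{-t..0}. u s \<in> U)}"

definition value_fun :: "('a::euclidean_space \<Rightarrow> 'b::euclidean_space \<Rightarrow> 'a) \<Rightarrow> 'b set \<Rightarrow> ('a \<Rightarrow> real)
     \<Rightarrow> 'a \<Rightarrow> real \<Rightarrow> ereal"
  where "value_fun f U g x0 t =
     (SUP p \<in> {(u, xs). u \<in> signals U t \<and> traj f u x0 t xs}.
        (INF s\<in>{-t..0}. ereal (g (snd p s))))"

definition nonanticipative :: "(real \<Rightarrow> 'a) set \<Rightarrow> real \<Rightarrow> ((real \<Rightarrow> 'a) \<Rightarrow> (real \<Rightarrow> 'c)) \<Rightarrow> bool"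
  where "nonanticipative L t \<xi> \<longleftrightarrow>
     (\<forall>v1\<in>L. \<forall>v2\<in>L. \<forall>s\<in>{-t..0}.
        (\<forall>r\<in>{-t..s}. v1 r = v2 r) \<longrightarrow> (\<forall>r\<in>{-t..s}. \<xi> v1 r = \<xi> v2 r))"

definition game_traj :: "'a::euclidean_space \<Rightarrow> real \<Rightarrow> (real \<Rightarrow> 'a) \<Rightarrow> (real \<Rightarrow> 'a) \<Rightarrow> real \<Rightarrow> 'a"
  where "game_traj x0 t v w s = x0 + integral {-t..s} (\<lambda>r. v r + w r)"

(* follower action set W(x, v) = E(x; x_j) for v = v_j (union over all j with v_j = v) *)
definition Wset :: "nat \<Rightarrow> (nat \<Rightarrow> 'a) \<Rightarrow> (nat \<Rightarrow> 'a) \<Rightarrow> ('a \<Rightarrow> 'a \<Rightarrow> 'a set) \<Rightarrow> 'a \<Rightarrow> 'a \<Rightarrow> 'a set"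
  where "Wset N xd vd E x v = (\<Union>j\<in>{j\<in>{1..N}. vd j = v}. E x (xd j))"

definition follower_strategies :: "nat \<Rightarrow> (nat \<Rightarrow> 'a::euclidean_space) \<Rightarrow> (nat \<Rightarrow> 'a) \<Rightarrow> ('a \<Rightarrow> 'a \<Rightarrow> 'a set)
     \<Rightarrow> 'a \<Rightarrow> real \<Rightarrow> ((real \<Rightarrow> 'a) \<Rightarrow> (real \<Rightarrow> 'a)) set"
  where "follower_strategies N xd vd E x0 t =
     {\<xi>. nonanticipative (signals (vd ` {1..N}) t) t \<xi> \<and>
          (\<forall>v\<in>signals (vd ` {1..N}) t.
             \<xi> v measurable_on {-t..0} \<and>
             (\<lambda>r. v r + \<xi> v r) integrable_on {-t..0} \<and>
             (\<forall>s\<in>{-t..0}. \<xi> v s \<in> Wset N xd vd E (game_traj x0 t v (\<xi> v) s) (v s)))}"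

definition game_value :: "nat \<Rightarrow> (nat \<Rightarrow> 'a::euclidean_space) \<Rightarrow> (nat \<Rightarrow> 'a) \<Rightarrow> ('a \<Rightarrow> 'a \<Rightarrow> 'a set)
     \<Rightarrow> ('a \<Rightarrow> real) \<Rightarrow> 'a \<Rightarrow> real \<Rightarrow> ereal"
  where "game_value N xd vd E g x0 t =
     (INF \<xi>\<in>follower_strategies N xd vd E x0 t.
        SUP v\<in>signals (vd ` {1..N}) t.
          INF s\<in>{-t..0}. ereal (g (game_traj x0 t v (\<xi> v) s)))"

end

theory Submission
  imports Defs
begin

(* Whenever the leader plays a recorded velocity v_j, the follower answers with the
   model error f(x, u_j) - v_j, which lies in E(x; x_j) by assumption. The game
   trajectory then solves x' = f(x, u_j): it is a genuine trajectory of the system under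
   a control with values in {u_i}, so every leader payoff is bounded by the value with
   restricted controls. This follower strategy is non-anticipative because solutions of
   the integral equation with Lipschitz right-hand side are unique, hence depend causally
   on the control. Existence and uniqueness come from the Bielecki norm
   sup exp(-K (s - a)) |x s| with K >= 2 L, in which the Picard map halves distances.
   The second inequality is monotonicity of the supremum in the control set. *)

lemma measurable_finite_valued_compose:
  fixes v :: "'a \<Rightarrow> 'b::t1_space"
  assumes "finite C" and v: "v \<in> borel_measurable M" and "\<forall>x\<in>space M. v x \<in> C"
    and h: "\<And>c. c \<in> C \<Longrightarrow> (\<lambda>x. h c x) \<in> measurable M N"
  shows "(\<lambda>x. h (v x) x) \<in> measurable M N"
proof (rule measurable_compose_countable'[OF h])
  have "v -` {c} \<inter> space M \<in> sets M" for c
    using measurable_sets[OF v] by (simp add: closed_singleton)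
  then show "v \<in> measurable M (count_space C)"
    using assms(1,3) by (auto simp: measurable_count_space_eq2)
qed (use assms(1) countable_finite in auto)

lemma integrable_finite_valued_control:
  fixes f :: "'a::euclidean_space \<Rightarrow> 'b::euclidean_space \<Rightarrow> 'a"
    and X :: "'d::euclidean_space \<Rightarrow> 'a"
  assumes "compact S" and "finite C"
    and u: "u \<in> borel_measurable (lebesgue_on S)" and uC: "\<forall>r\<in>S. u r \<in> C"
    and lip: "\<forall>c\<in>C. L-lipschitz_on UNIV (\<lambda>y. f y c)"
    and X: "continuous_on S X"
  shows "(\<lambda>r. f (X r) (u r)) integrable_on S"
proof -
  have S: "S \<in> sets lebesgue"
    using \<open>compact S\<close> lmeasurable_compact by blast
  obtain B where B: "\<forall>r\<in>S. norm (X r) \<le> B"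
    using compact_imp_bounded[OF compact_continuous_image[OF X \<open>compact S\<close>]]
    by (auto simp: bounded_iff)
  define A where "A = (\<Sum>c\<in>C. norm (f 0 c))"
  show ?thesis
  proof (rule measurable_bounded_by_integrable_imp_integrable[OF _ _ _ S])
    show "(\<lambda>r. f (X r) (u r)) \<in> borel_measurable (lebesgue_on S)"
    proof (rule measurable_finite_valued_compose[OF \<open>finite C\<close> u])
      fix c assume "c \<in> C"
      then have "continuous_on UNIV (\<lambda>y. f y c)"
        using lip lipschitz_on_continuous_on by blast
      then have "continuous_on S (\<lambda>r. f (X r) c)"
        using continuous_on_compose2[OF _ X] by blast
      then show "(\<lambda>r. f (X r) c) \<in> borel_measurable (lebesgue_on S)"
        by (rule continuous_imp_measurable_on_sets_lebesgue[OF _ S])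
    qed (use uC S in auto)
    show "(\<lambda>r. A + L * B) integrable_on S"
      using \<open>compact S\<close> by (simp add: lmeasurable_compact integrable_on_const)
    fix r assume r: "r \<in> S"
    then have c: "u r \<in> C" using uC by blast
    have "norm (f (X r) (u r)) \<le> norm (f 0 (u r)) + L * norm (X r)"
      using lipschitz_onD[of L UNIV "\<lambda>y. f y (u r)" "X r" 0] lip c
        norm_triangle_ineq2[of "f (X r) (u r)" "f 0 (u r)"]
      by (auto simp: dist_norm)
    also have "\<dots> \<le> A + L * B"
      using member_le_sum[OF c, of "\<lambda>c. norm (f 0 c)"] \<open>finite C\<close> B r
        lipschitz_on_nonneg[of L UNIV "\<lambda>y. f y (u r)"] lip c
      by (intro add_mono mult_left_mono) (auto simp: A_def)
    finally show "norm (f (X r) (u r)) \<le> A + L * B" .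
  qed
qed

lemma lipschitz_integral_exp_weighted_bound:
  fixes F :: "real \<Rightarrow> 'a \<Rightarrow> 'a::euclidean_space"
  assumes "a \<le> s" and K: "0 < K" "2 * L \<le> K"
    and lip: "\<forall>q\<in>{a..s}. L-lipschitz_on UNIV (F q)"
    and int1: "(\<lambda>q. F q (X q)) integrable_on {a..s}"
    and int2: "(\<lambda>q. F q (Y q)) integrable_on {a..s}"
    and close: "\<forall>q\<in>{a..s}. dist (X q) (Y q) \<le> m * exp (K * (q - a))"
  shows "dist (integral {a..s} (\<lambda>q. F q (X q))) (integral {a..s} (\<lambda>q. F q (Y q)))
           \<le> m / 2 * exp (K * (s - a))"
proof -
  have a: "a \<in> {a..s}" using \<open>a \<le> s\<close> by simp
  have L: "0 \<le> L" using lip a lipschitz_on_nonneg by blast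
  have "0 \<le> m * exp (K * (a - a))"
    using close a by (meson zero_le_dist order.trans)
  then have m: "0 \<le> m" by simp
  have "((\<lambda>q. L * m * exp (K * (q - a))) has_integral
          (L * m * exp (K * (s - a)) / K - L * m * exp (K * (a - a)) / K)) {a..s}"
    using \<open>a \<le> s\<close> K
    by (intro fundamental_theorem_of_calculus)
       (auto intro!: derivative_eq_intros simp flip: has_real_derivative_iff_has_vector_derivative)
  then have exp_int: "((\<lambda>q. L * m * exp (K * (q - a))) has_integral
          (L * m * exp (K * (s - a)) / K - L * m / K)) {a..s}"
    by simp
  have "norm (F q (X q) - F q (Y q)) \<le> L * m * exp (K * (q - a))" if q: "q \<in> {a..s}" for q
  proof -
    have "norm (F q (X q) - F q (Y q)) \<le> L * dist (X q) (Y q)"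
      using lipschitz_onD[of L UNIV "F q"] lip q by (simp add: dist_norm)
    also have "\<dots> \<le> L * (m * exp (K * (q - a)))"
      using close q L by (simp add: mult_left_mono)
    finally show ?thesis by simp
  qed
  then have "norm (integral {a..s} (\<lambda>q. F q (X q) - F q (Y q)))
               \<le> L * m * exp (K * (s - a)) / K - L * m / K"
    using integral_norm_bound_integral[OF integrable_diff[OF int1 int2] has_integral_integrable[OF exp_int]]
      integral_unique[OF exp_int] by simp
  also have "\<dots> \<le> (L / K) * (m * exp (K * (s - a)))"
    using L m K by (simp add: mult.assoc)
  also have "\<dots> \<le> (1 / 2) * (m * exp (K * (s - a)))"
    using K m by (intro mult_right_mono) (auto simp: divide_simps)
  finally show ?thesis
    by (simp add: dist_norm integral_diff[OF int1 int2])
qed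

lemma integral_equation_solution_continuous:
  fixes a b :: real and h :: "real \<Rightarrow> 'a::euclidean_space"
  assumes sol: "\<forall>s\<in>{a..b}. (h has_integral (X s - x0)) {a..s}"
  shows "continuous_on {a..b} X"
proof (cases "a \<le> b")
  case True
  then have "(h has_integral (X b - x0)) {a..b}"
    using sol by simp
  then have "continuous_on {a..b} (\<lambda>s. x0 + integral {a..s} h)"
    by (intro continuous_intros indefinite_integral_continuous_1 has_integral_integrable)
  moreover have "x0 + integral {a..s} h = X s" if "s \<in> {a..b}" for s
    using integral_unique[OF sol[rule_format, OF that]] by simp
  ultimately show ?thesis
    by (rule continuous_on_eq)
qed simp

lemma integral_equation_unique:
  fixes F :: "real \<Rightarrow> 'a \<Rightarrow> 'a::euclidean_space"
  assumes lip: "\<forall>r\<in>{a..b}. L-lipschitz_on UNIV (F r)"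
    and sol1: "\<forall>s\<in>{a..b}. ((\<lambda>r. F r (X1 r)) has_integral (X1 s - x0)) {a..s}"
    and sol2: "\<forall>s\<in>{a..b}. ((\<lambda>r. F r (X2 r)) has_integral (X2 s - x0)) {a..s}"
  shows "\<forall>s\<in>{a..b}. X1 s = X2 s"
proof (cases "a \<le> b")
  case True
  define K where "K = 2 * L + 2"
  have K: "0 < K" "2 * L \<le> K"
    using lip True lipschitz_on_nonneg[of L UNIV "F a"] by (auto simp: K_def)
  define D where "D r = exp (- (K * (r - a))) * dist (X1 r) (X2 r)" for r
  have "continuous_on {a..b} D"
    unfolding D_def using integral_equation_solution_continuous[OF sol1]
      integral_equation_solution_continuous[OF sol2]
    by (intro continuous_intros)
  then obtain r0 where r0: "r0 \<in> {a..b}" and max: "\<forall>r\<in>{a..b}. D r \<le> D r0"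
    using continuous_attains_sup[of "{a..b}" D] True by auto
  have unweight: "dist (X1 q) (X2 q) = D q * exp (K * (q - a))" for q
    by (simp add: D_def exp_minus)
  have close: "dist (X1 q) (X2 q) \<le> D r0 * exp (K * (q - a))" if "q \<in> {a..b}" for q
    using max that unfolding unweight by (simp add: mult_right_mono)
  have half: "D r \<le> D r0 / 2" if r: "r \<in> {a..b}" for r
  proof -
    have sub: "{a..r} \<subseteq> {a..b}" using r by auto
    have "dist (X1 r) (X2 r)
          = dist (integral {a..r} (\<lambda>q. F q (X1 q))) (integral {a..r} (\<lambda>q. F q (X2 q)))"
      using integral_unique[OF sol1[rule_format, OF r]] integral_unique[OF sol2[rule_format, OF r]]
      by (simp add: dist_norm)
    also have "\<dots> \<le> D r0 / 2 * exp (K * (r - a))"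
      using sol1 sol2 r sub lip close
      by (intro lipschitz_integral_exp_weighted_bound[OF _ K]) (auto dest: has_integral_integrable)
    finally show ?thesis unfolding unweight by simp
  qed
  have "D r0 \<le> 0" using half[OF r0] by simp
  then have "D s \<le> 0" if "s \<in> {a..b}" for s
    using max that by (meson order.trans)
  moreover have "0 \<le> D s" for s
    by (simp add: D_def)
  ultimately show ?thesis
    using unweight by (metis dist_eq_0_iff mult_zero_left order.antisym)
qed simp

lemma ext_cont_in_bcontfun:
  fixes f :: "'a::euclidean_space \<Rightarrow> 'b::metric_space"
  assumes "continuous_on (cbox a b) f"
  shows "ext_cont f a b \<in> bcontfun"
  using assms
  by (auto intro!: continuous_on_ext_cont simp: bcontfun_def)
    (auto simp: ext_cont_def intro!: clamp_bounded compact_imp_bounded[OF compact_continuous_image])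

(* The Picard map X \<mapsto> x0 + integral {a..s} F r (X r) conjugated by the weight exp (K (s - a)). *)
definition weighted_picard ::
    "real \<Rightarrow> real \<Rightarrow> (real \<Rightarrow> 'a \<Rightarrow> 'a::euclidean_space) \<Rightarrow> 'a \<Rightarrow> (real \<Rightarrow> 'a) \<Rightarrow> real \<Rightarrow> 'a"
  where "weighted_picard a K F x0 \<phi> s =
    exp (- (K * (s - a))) *\<^sub>R (x0 + integral {a..s} (\<lambda>r. F r (exp (K * (r - a)) *\<^sub>R \<phi> r)))"

lemma dist_weighted_picard_le:
  fixes F :: "real \<Rightarrow> 'a \<Rightarrow> 'a::euclidean_space"
  assumes "a \<le> s" and K: "0 < K" "2 * L \<le> K"
    and lip: "\<forall>r\<in>{a..s}. L-lipschitz_on UNIV (F r)"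
    and int_\<phi>: "(\<lambda>r. F r (exp (K * (r - a)) *\<^sub>R \<phi> r)) integrable_on {a..s}"
    and int_\<psi>: "(\<lambda>r. F r (exp (K * (r - a)) *\<^sub>R \<psi> r)) integrable_on {a..s}"
    and close: "\<forall>r\<in>{a..s}. dist (\<phi> r) (\<psi> r) \<le> d"
  shows "dist (weighted_picard a K F x0 \<phi> s) (weighted_picard a K F x0 \<psi> s) \<le> d / 2"
proof -
  have "dist (exp (K * (r - a)) *\<^sub>R \<phi> r) (exp (K * (r - a)) *\<^sub>R \<psi> r) \<le> d * exp (K * (r - a))"
    if r: "r \<in> {a..s}" for r
  proof -
    have "dist (exp (K * (r - a)) *\<^sub>R \<phi> r) (exp (K * (r - a)) *\<^sub>R \<psi> r)
        = exp (K * (r - a)) * dist (\<phi> r) (\<psi> r)"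
      by (simp add: dist_norm flip: scaleR_diff_right)
    also have "\<dots> \<le> exp (K * (r - a)) * d"
      using close r by (intro mult_left_mono) auto
    finally show ?thesis
      by (simp only: mult.commute)
  qed
  then have "dist (integral {a..s} (\<lambda>r. F r (exp (K * (r - a)) *\<^sub>R \<phi> r)))
                  (integral {a..s} (\<lambda>r. F r (exp (K * (r - a)) *\<^sub>R \<psi> r)))
             \<le> d / 2 * exp (K * (s - a))"
    by (intro lipschitz_integral_exp_weighted_bound[OF \<open>a \<le> s\<close> K lip int_\<phi> int_\<psi>]) blast
  then have "exp (- (K * (s - a))) * dist (integral {a..s} (\<lambda>r. F r (exp (K * (r - a)) *\<^sub>R \<phi> r)))
                  (integral {a..s} (\<lambda>r. F r (exp (K * (r - a)) *\<^sub>R \<psi> r)))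
             \<le> exp (- (K * (s - a))) * (d / 2 * exp (K * (s - a)))"
    by (rule mult_left_mono) simp
  also have "\<dots> = d / 2 * (exp (K * (s - a)) * exp (- (K * (s - a))))"
    by (simp only: ac_simps)
  also have "\<dots> = d / 2"
    by (simp only: exp_minus_inverse mult_1_right)
  finally show ?thesis
    by (simp add: weighted_picard_def dist_norm flip: scaleR_diff_right)
qed

lemma weighted_picard_fixed_point:
  fixes F :: "real \<Rightarrow> 'a \<Rightarrow> 'a::euclidean_space"
  assumes "a \<le> b" and K: "0 < K" "2 * L \<le> K"
    and lip: "\<forall>r\<in>{a..b}. L-lipschitz_on UNIV (F r)"
    and integrable: "\<And>X. continuous_on {a..b} X \<Longrightarrow> (\<lambda>r. F r (X r)) integrable_on {a..b}"
  shows "\<exists>\<phi>. continuous_on {a..b} \<phi> \<and> (\<forall>s\<in>{a..b}. weighted_picard a K F x0 \<phi> s = \<phi> s)"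
proof -
  let ?P = "weighted_picard a K F x0"
  have int: "(\<lambda>r. F r (exp (K * (r - a)) *\<^sub>R apply_bcontfun \<phi> r)) integrable_on {a..s}"
    if "s \<in> {a..b}" for \<phi> s
    using that
    by (intro integrable_on_subinterval[OF integrable] continuous_intros continuous_on_apply_bcontfun) auto
  have "continuous_on {a..b} (?P (apply_bcontfun \<phi>))" for \<phi>
    unfolding weighted_picard_def using \<open>a \<le> b\<close>
    by (intro continuous_intros indefinite_integral_continuous_1 int[where s = b]) auto
  then have P_bcontfun: "ext_cont (?P (apply_bcontfun \<phi>)) a b \<in> bcontfun" for \<phi>
    by (intro ext_cont_in_bcontfun) simp
  \<comment> \<open>Clamping to {a..b} extends to the complete space of bounded continuous functions on the line.\<close>
  define T where "T \<phi> = Bcontfun (ext_cont (?P (apply_bcontfun \<phi>)) a b)" for \<phi>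
  have T_apply: "apply_bcontfun (T \<phi>) s = ?P (apply_bcontfun \<phi>) (clamp a b s)" for \<phi> s
    unfolding T_def Bcontfun_inverse[OF P_bcontfun] by (simp add: ext_cont_def)
  have clamp: "clamp a b s \<in> {a..b}" for s
    using clamp_in_interval[of a b s] \<open>a \<le> b\<close> by simp
  have contraction: "dist (T \<phi>1) (T \<phi>2) \<le> 1 / 2 * dist \<phi>1 \<phi>2" for \<phi>1 \<phi>2
  proof (rule dist_bound)
    fix s
    have "dist (T \<phi>1 s) (T \<phi>2 s) \<le> dist \<phi>1 \<phi>2 / 2"
      unfolding T_apply
    proof (rule dist_weighted_picard_le[OF _ K])
      show "a \<le> clamp a b s" and "\<forall>r\<in>{a..clamp a b s}. L-lipschitz_on UNIV (F r)"
        using clamp[of s] lip by auto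
      show "(\<lambda>r. F r (exp (K * (r - a)) *\<^sub>R \<phi>1 r)) integrable_on {a..clamp a b s}"
        and "(\<lambda>r. F r (exp (K * (r - a)) *\<^sub>R \<phi>2 r)) integrable_on {a..clamp a b s}"
        by (intro int clamp)+
      show "\<forall>r\<in>{a..clamp a b s}. dist (\<phi>1 r) (\<phi>2 r) \<le> dist \<phi>1 \<phi>2"
        using dist_bounded by blast
    qed
    then show "dist (T \<phi>1 s) (T \<phi>2 s) \<le> 1 / 2 * dist \<phi>1 \<phi>2"
      by simp
  qed
  obtain \<phi> where "T \<phi> = \<phi>"
    using banach_fix_type[of "1 / 2" T] contraction by auto
  moreover have "clamp a b s = s" if "s \<in> {a..b}" for s
    using clamp_cancel_cbox[of s a b] that by simp
  ultimately have "?P (apply_bcontfun \<phi>) s = \<phi> s" if "s \<in> {a..b}" for s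
    using T_apply[of \<phi> s] that by simp
  then show ?thesis
    by (intro exI[where x = "apply_bcontfun \<phi>"] conjI ballI continuous_on_apply_bcontfun)
qed

lemma integral_equation_exists:
  fixes F :: "real \<Rightarrow> 'a \<Rightarrow> 'a::euclidean_space"
  assumes "a \<le> b"
    and lip: "\<forall>r\<in>{a..b}. L-lipschitz_on UNIV (F r)"
    and integrable: "\<And>X. continuous_on {a..b} X \<Longrightarrow> (\<lambda>r. F r (X r)) integrable_on {a..b}"
  shows "\<exists>X. \<forall>s\<in>{a..b}. ((\<lambda>r. F r (X r)) has_integral (X s - x0)) {a..s}"
proof -
  define K where "K = 2 * L + 2"
  have K: "0 < K" "2 * L \<le> K"
    using lip \<open>a \<le> b\<close> lipschitz_on_nonneg[of L UNIV "F a"] by (auto simp: K_def)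
  obtain \<phi> where cont: "continuous_on {a..b} \<phi>"
    and fixed: "\<forall>s\<in>{a..b}. weighted_picard a K F x0 \<phi> s = \<phi> s"
    using weighted_picard_fixed_point[OF \<open>a \<le> b\<close> K lip integrable] by blast
  define X where "X r = exp (K * (r - a)) *\<^sub>R \<phi> r" for r
  have unweight: "exp (K * (s - a)) *\<^sub>R weighted_picard a K F x0 \<phi> s
      = x0 + integral {a..s} (\<lambda>r. F r (X r))" for s
    unfolding weighted_picard_def X_def by (simp only: scaleR_scaleR exp_minus_inverse scaleR_one)
  have eq: "X s - x0 = integral {a..s} (\<lambda>r. F r (X r))" if "s \<in> {a..b}" for s
    using unweight[of s, unfolded fixed[rule_format, OF that]] unfolding X_def
    by (simp only: add_diff_cancel_left')
  have int: "(\<lambda>r. F r (X r)) integrable_on {a..s}" if "s \<in> {a..b}" for s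
    using cont that unfolding X_def
    by (intro integrable_on_subinterval[OF integrable] continuous_intros) auto
  have "((\<lambda>r. F r (X r)) has_integral (X s - x0)) {a..s}" if "s \<in> {a..b}" for s
    unfolding eq[OF that] by (rule integrable_integral[OF int[OF that]])
  then show ?thesis
    by (intro exI[where x = X] ballI)
qed

lemma signals_mono: "U \<subseteq> U' \<Longrightarrow> signals U t \<subseteq> signals U' t"
  by (auto simp: signals_def)

lemma value_fun_mono: "U \<subseteq> U' \<Longrightarrow> value_fun f U g x0 t \<le> value_fun f U' g x0 t"
  unfolding value_fun_def using signals_mono[of U U' t] by (intro SUP_subset_mono) auto

lemma signals_iff_borel_measurable:
  "u \<in> signals U t \<longleftrightarrow> u \<in> borel_measurable (lebesgue_on {-t..0}) \<and> (\<forall>s\<in>{-t..0}. u s \<in> U)"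
  by (simp add: signals_def measurable_on_iff_borel_measurable)

lemma signals_compose:
  assumes "finite C" and "v \<in> signals C t"
  shows "(\<lambda>r. h (v r)) \<in> signals (h ` C) t"
  using assms measurable_finite_valued_compose[of C v "lebesgue_on {-t..0}" "\<lambda>c r. h c"]
  by (auto simp: signals_iff_borel_measurable)

lemma traj_exists:
  fixes f :: "'a::euclidean_space \<Rightarrow> 'b::euclidean_space \<Rightarrow> 'a"
  assumes "0 \<le> t" and "finite C" and u: "u \<in> signals C t"
    and lip: "\<forall>c\<in>C. L-lipschitz_on UNIV (\<lambda>y. f y c)"
  shows "\<exists>X. traj f u x0 t X"
proof -
  have "\<exists>X. \<forall>s\<in>{-t..0}. ((\<lambda>r. f (X r) (u r)) has_integral (X s - x0)) {-t..s}"
  proof (rule integral_equation_exists[where F = "\<lambda>r y. f y (u r)"])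
    show "\<forall>r\<in>{-t..0}. L-lipschitz_on UNIV (\<lambda>y. f y (u r))"
      using u lip by (auto simp: signals_def)
    show "(\<lambda>r. f (X r) (u r)) integrable_on {-t..0}" if "continuous_on {-t..0} X" for X
      using u that \<open>finite C\<close> lip
      by (intro integrable_finite_valued_control) (auto simp: signals_iff_borel_measurable)
  qed (use \<open>0 \<le> t\<close> in simp)
  then show ?thesis by (simp add: traj_def)
qed

lemma traj_unique_upto:
  assumes lip: "\<forall>c\<in>U. L-lipschitz_on UNIV (\<lambda>y. f y c)" and "s \<le> 0"
    and u1: "\<forall>r\<in>{-t..s}. u1 r \<in> U" and agree: "\<forall>r\<in>{-t..s}. u1 r = u2 r"
    and traj1: "traj f u1 x0 t X1" and traj2: "traj f u2 x0 t X2"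
  shows "\<forall>r\<in>{-t..s}. X1 r = X2 r"
proof (rule integral_equation_unique[where F = "\<lambda>r y. f y (u1 r)"])
  show "\<forall>r\<in>{-t..s}. L-lipschitz_on UNIV (\<lambda>y. f y (u1 r))"
    using lip u1 by auto
  show "\<forall>s'\<in>{-t..s}. ((\<lambda>r. f (X1 r) (u1 r)) has_integral (X1 s' - x0)) {-t..s'}"
    using traj1 \<open>s \<le> 0\<close> by (auto simp: traj_def)
  show "\<forall>s'\<in>{-t..s}. ((\<lambda>r. f (X2 r) (u1 r)) has_integral (X2 s' - x0)) {-t..s'}"
  proof
    fix s' assume s': "s' \<in> {-t..s}"
    then have "((\<lambda>r. f (X2 r) (u2 r)) has_integral (X2 s' - x0)) {-t..s'}"
      using traj2 \<open>s \<le> 0\<close> by (auto simp: traj_def)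
    then show "((\<lambda>r. f (X2 r) (u1 r)) has_integral (X2 s' - x0)) {-t..s'}"
      using agree s' by (subst has_integral_cong) auto
  qed
qed

definition some_traj ::
    "('a::euclidean_space \<Rightarrow> 'b \<Rightarrow> 'a) \<Rightarrow> (real \<Rightarrow> 'b) \<Rightarrow> 'a \<Rightarrow> real \<Rightarrow> real \<Rightarrow> 'a"
  where "some_traj f u x0 t = (SOME X. traj f u x0 t X)"

definition model_error_strategy ::
    "('a::euclidean_space \<Rightarrow> 'b \<Rightarrow> 'a) \<Rightarrow> ('a \<Rightarrow> 'b) \<Rightarrow> 'a \<Rightarrow> real \<Rightarrow> (real \<Rightarrow> 'a) \<Rightarrow> real \<Rightarrow> 'a"
  where "model_error_strategy f h x0 t v r =
    f (some_traj f (\<lambda>r. h (v r)) x0 t r) (h (v r)) - v r"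

lemma traj_some_traj:
  fixes f :: "'a::euclidean_space \<Rightarrow> 'b::euclidean_space \<Rightarrow> 'a"
  assumes "0 \<le> t" and "finite C" and "v \<in> signals C t"
    and "\<forall>c\<in>h ` C. L-lipschitz_on UNIV (\<lambda>y. f y c)"
  shows "traj f (\<lambda>r. h (v r)) x0 t (some_traj f (\<lambda>r. h (v r)) x0 t)"
  unfolding some_traj_def
  using traj_exists[OF \<open>0 \<le> t\<close> _ signals_compose] assms by (metis finite_imageI someI_ex)

lemma game_traj_model_error_strategy:
  assumes "0 \<le> t" and traj: "traj f (\<lambda>r. h (v r)) x0 t (some_traj f (\<lambda>r. h (v r)) x0 t)"
    and "s \<in> {-t..0}"
  shows "game_traj x0 t v (model_error_strategy f h x0 t v) s = some_traj f (\<lambda>r. h (v r)) x0 t s"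
  using integral_unique[OF traj[unfolded traj_def, rule_format, OF \<open>s \<in> {-t..0}\<close>]]
  by (simp add: game_traj_def model_error_strategy_def)

lemma nonanticipative_model_error_strategy:
  fixes f :: "'a::euclidean_space \<Rightarrow> 'b::euclidean_space \<Rightarrow> 'a"
  assumes "0 \<le> t" and "finite C" and lip: "\<forall>c\<in>h ` C. L-lipschitz_on UNIV (\<lambda>y. f y c)"
  shows "nonanticipative (signals C t) t (model_error_strategy f h x0 t)"
  unfolding nonanticipative_def
proof (intro ballI impI)
  fix v1 v2 s r
  assume v1: "v1 \<in> signals C t" and v2: "v2 \<in> signals C t" and s: "s \<in> {-t..0}"
    and agree: "\<forall>r\<in>{-t..s}. v1 r = v2 r" and r: "r \<in> {-t..s}"
  have "\<forall>r\<in>{-t..s}. some_traj f (\<lambda>r. h (v1 r)) x0 t r = some_traj f (\<lambda>r. h (v2 r)) x0 t r"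
    using traj_some_traj[OF assms(1,2) v1 lip] traj_some_traj[OF assms(1,2) v2 lip]
    by (rule traj_unique_upto[OF lip, rotated 3]) (use v1 v2 s agree in \<open>auto simp: signals_def\<close>)
  then show "model_error_strategy f h x0 t v1 r = model_error_strategy f h x0 t v2 r"
    using agree r by (simp add: model_error_strategy_def)
qed

lemma model_error_strategy_integrable:
  fixes f :: "'a::euclidean_space \<Rightarrow> 'b \<Rightarrow> 'a"
  assumes "0 \<le> t" and v: "v measurable_on {-t..0}"
    and traj: "traj f (\<lambda>r. h (v r)) x0 t (some_traj f (\<lambda>r. h (v r)) x0 t)"
  shows "(\<lambda>r. v r + model_error_strategy f h x0 t v r) integrable_on {-t..0}"
    and "model_error_strategy f h x0 t v measurable_on {-t..0}"
proof -
  let ?X = "some_traj f (\<lambda>r. h (v r)) x0 t"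
  have "((\<lambda>r. f (?X r) (h (v r))) has_integral (?X 0 - x0)) {-t..0}"
    using traj \<open>0 \<le> t\<close> by (simp add: traj_def)
  then have int: "(\<lambda>r. f (?X r) (h (v r))) integrable_on {-t..0}"
    by (rule has_integral_integrable)
  then show "(\<lambda>r. v r + model_error_strategy f h x0 t v r) integrable_on {-t..0}"
    by (simp add: model_error_strategy_def)
  have "(\<lambda>r. f (?X r) (h (v r)) - v r) measurable_on {-t..0}"
    using integrable_imp_measurable[OF int] v
    by (intro measurable_on_diff) (auto simp: measurable_on_iff_borel_measurable)
  moreover have "model_error_strategy f h x0 t v = (\<lambda>r. f (?X r) (h (v r)) - v r)"
    by (simp add: fun_eq_iff model_error_strategy_def)
  ultimately show "model_error_strategy f h x0 t v measurable_on {-t..0}"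
    by simp
qed

lemma model_error_strategy_in_follower_strategies:
  fixes f :: "'a::euclidean_space \<Rightarrow> 'b::euclidean_space \<Rightarrow> 'a"
  assumes "0 \<le> t"
    and lip: "\<forall>u\<in>ud ` {1..N}. L-lipschitz_on UNIV (\<lambda>y. f y u)"
    and J: "\<forall>i\<in>{1..N}. J (vd i) \<in> {1..N} \<and> vd (J (vd i)) = vd i"
    and E_bound: "\<forall>i\<in>{1..N}. \<forall>y. f y (ud i) - vd i \<in> E y (xd i)"
  shows "model_error_strategy f (\<lambda>c. ud (J c)) x0 t \<in> follower_strategies N xd vd E x0 t"
  unfolding follower_strategies_def mem_Collect_eq
proof (intro conjI ballI)
  let ?\<xi> = "model_error_strategy f (\<lambda>c. ud (J c)) x0 t"
  have lip_J: "\<forall>c\<in>(\<lambda>c. ud (J c)) ` vd ` {1..N}. L-lipschitz_on UNIV (\<lambda>y. f y c)"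
    using lip J by auto
  show "nonanticipative (signals (vd ` {1..N}) t) t ?\<xi>"
    by (rule nonanticipative_model_error_strategy[OF \<open>0 \<le> t\<close> _ lip_J]) simp
  fix v assume v: "v \<in> signals (vd ` {1..N}) t"
  let ?X = "some_traj f (\<lambda>r. ud (J (v r))) x0 t"
  have traj: "traj f (\<lambda>r. ud (J (v r))) x0 t ?X"
    by (rule traj_some_traj[OF \<open>0 \<le> t\<close> _ v lip_J]) simp
  have "v measurable_on {-t..0}"
    using v by (simp add: signals_def)
  then show "(\<lambda>r. v r + ?\<xi> v r) integrable_on {-t..0}" and "?\<xi> v measurable_on {-t..0}"
    using model_error_strategy_integrable[OF \<open>0 \<le> t\<close> _ traj] by blast+
  fix s assume s: "s \<in> {-t..0}"
  then have "v s \<in> vd ` {1..N}"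
    using v by (simp add: signals_def)
  then obtain i where i: "i \<in> {1..N}" "v s = vd i"
    by blast
  have j: "J (vd i) \<in> {1..N}" "vd (J (vd i)) = vd i"
    using J i by auto
  then have "f (?X s) (ud (J (vd i))) - vd (J (vd i)) \<in> E (?X s) (xd (J (vd i)))"
    using E_bound by blast
  moreover have "game_traj x0 t v (?\<xi> v) s = ?X s"
    by (rule game_traj_model_error_strategy[OF \<open>0 \<le> t\<close> traj s])
  ultimately show "?\<xi> v s \<in> Wset N xd vd E (game_traj x0 t v (?\<xi> v) s) (v s)"
    using i j unfolding Wset_def by (auto simp: model_error_strategy_def)
qed

lemma game_value_le_value_fun:
  fixes f :: "'a::euclidean_space \<Rightarrow> 'b::euclidean_space \<Rightarrow> 'a"
  assumes "0 \<le> t"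
    and lip: "\<forall>u\<in>ud ` {1..N}. L-lipschitz_on UNIV (\<lambda>y. f y u)"
    and J: "\<forall>i\<in>{1..N}. J (vd i) \<in> {1..N} \<and> vd (J (vd i)) = vd i"
    and E_bound: "\<forall>i\<in>{1..N}. \<forall>y. f y (ud i) - vd i \<in> E y (xd i)"
  shows "game_value N xd vd E g x0 t \<le> value_fun f (ud ` {1..N}) g x0 t"
proof -
  let ?\<xi> = "model_error_strategy f (\<lambda>c. ud (J c)) x0 t"
  have J_ud: "(\<lambda>c. ud (J c)) ` vd ` {1..N} \<subseteq> ud ` {1..N}"
    using J by auto
  then have lip_J: "\<forall>c\<in>(\<lambda>c. ud (J c)) ` vd ` {1..N}. L-lipschitz_on UNIV (\<lambda>y. f y c)"
    using lip by blast
  have "game_value N xd vd E g x0 t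
      \<le> (SUP v\<in>signals (vd ` {1..N}) t. INF s\<in>{-t..0}. ereal (g (game_traj x0 t v (?\<xi> v) s)))"
    unfolding game_value_def
    by (rule INF_lower[OF model_error_strategy_in_follower_strategies[OF assms]])
  also have "\<dots> \<le> value_fun f (ud ` {1..N}) g x0 t"
  proof (rule SUP_least)
    fix v assume v: "v \<in> signals (vd ` {1..N}) t"
    let ?X = "some_traj f (\<lambda>r. ud (J (v r))) x0 t"
    have traj: "traj f (\<lambda>r. ud (J (v r))) x0 t ?X"
      by (rule traj_some_traj[OF \<open>0 \<le> t\<close> _ v lip_J]) simp
    have "(\<lambda>r. ud (J (v r))) \<in> signals (ud ` {1..N}) t"
      using signals_compose[OF _ v] signals_mono[OF J_ud] by blast
    then have "(INF s\<in>{-t..0}. ereal (g (?X s))) \<le> value_fun f (ud ` {1..N}) g x0 t"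
      unfolding value_fun_def using traj by (intro SUP_upper2[of "(\<lambda>r. ud (J (v r)), ?X)"]) auto
    then show "(INF s\<in>{-t..0}. ereal (g (game_traj x0 t v (?\<xi> v) s))) \<le> value_fun f (ud ` {1..N}) g x0 t"
      using game_traj_model_error_strategy[OF \<open>0 \<le> t\<close> traj] by simp
  qed
  finally show ?thesis .
qed

theorem theorem4:
  fixes f :: "'a::euclidean_space \<Rightarrow> 'b::euclidean_space \<Rightarrow> 'a"
    and U :: "'b set"
    and g :: "'a \<Rightarrow> real"
    and N :: nat
    and xd :: "nat \<Rightarrow> 'a" and ud :: "nat \<Rightarrow> 'b" and vd :: "nat \<Rightarrow> 'a"
    and E :: "'a \<Rightarrow> 'a \<Rightarrow> 'a set"
    and x :: 'a and t :: real
  assumes f_lip: "\<exists>L. \<forall>u\<in>U. L-lipschitz_on UNIV (\<lambda>y. f y u)"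
    and g_lip: "\<exists>L. L-lipschitz_on UNIV g"
    and data_U: "\<forall>i\<in>{1..N}. ud i \<in> U"
    and data_v: "\<forall>i\<in>{1..N}. vd i = f (xd i) (ud i)"
    and E_closed: "\<forall>y z. closed (E y z)"
    and E_bound: "\<forall>i\<in>{1..N}. \<forall>y. f y (ud i) - vd i \<in> E y (xd i)"
    and t_nonneg: "t \<ge> 0"
  shows "game_value N xd vd E g x t \<le> value_fun f (ud ` {1..N}) g x t
       \<and> value_fun f (ud ` {1..N}) g x t \<le> value_fun f U g x t"
proof
  obtain L where "\<forall>u\<in>U. L-lipschitz_on UNIV (\<lambda>y. f y u)"
    using f_lip by blast
  then have lip: "\<forall>u\<in>ud ` {1..N}. L-lipschitz_on UNIV (\<lambda>y. f y u)"
    using data_U by blast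
  define J where "J c = (SOME j. j \<in> {1..N} \<and> vd j = c)" for c
  have "J (vd i) \<in> {1..N} \<and> vd (J (vd i)) = vd i" if "i \<in> {1..N}" for i
    unfolding J_def by (rule someI[of _ i]) (use that in simp)
  then show "game_value N xd vd E g x t \<le> value_fun f (ud ` {1..N}) g x t"
    by (intro game_value_le_value_fun[where J = J, OF t_nonneg lip _ E_bound]) blast
  show "value_fun f (ud ` {1..N}) g x t \<le> value_fun f U g x t"
    using data_U by (intro value_fun_mono) blast
qed

end
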